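(* Let $N\in\mathbb{N}$ be odd and either prime or divisible by at least two distinct primes. Let $b\in\mathbb{Z}$ and $f\in\mathbb{Z}[X]$ with $f(b)=N$, let $d:=\deg f$, and suppose $d$ is smaller than $q:=\max\{q'\text{ prime}:q'\mid N\}$ and $\gcd(\mathrm{lc}(f),N)=1$, where $\mathrm{lc}(f)$ is the leading coefficient of $f$. Then \[N\text{ is prime}\iff \forall x\in\{0,\dots,N-1\}:\ f(x)^{N-1}\bmod N\in\{0,1\}.\] *)

theory Defs
  imports "HOL-Computational_Algebra.Polynomial" "HOL-Computational_Algebra.Primes"
begin

end

theory Submission
  imports Defs "HOL-Number_Theory.Number_Theory"
begin

text \<open>
  If \<open>N\<close> is prime, the criterion is Fermat's little theorem. Otherwise let \<open>q\<close> be the largest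
  prime factor of \<open>N\<close> and \<open>p \<noteq> q\<close> another one. Modulo \<open>q\<close> the polynomial \<open>f\<close> has nonzero
  leading coefficient and degree below \<open>q\<close>, so it has a non-root \<open>r\<close>; modulo \<open>p\<close> it has the root
  \<open>b\<close>, since \<open>f(b) = N\<close>. By the Chinese remainder theorem some \<open>x < p q \<le> N\<close> is congruent to
  \<open>b\<close> mod \<open>p\<close> and to \<open>r\<close> mod \<open>q\<close>. Then \<open>p\<close> divides \<open>f(x)^(N-1)\<close> and \<open>q\<close> does not, so
  \<open>f(x)^(N-1) mod N\<close> is neither \<open>0\<close> nor \<open>1\<close>.
\<close>

lemma cong_poly:
  fixes f :: "'a::unique_euclidean_semiring poly"
  assumes "[x = y] (mod m)"
  shows "[poly f x = poly f y] (mod m)"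
  by (induction f) (simp_all add: assms cong_add cong_mult)

lemma lead_coeff_synthetic_div:
  fixes g :: "'a::comm_ring_1 poly"
  assumes "degree g > 0"
  shows "lead_coeff (synthetic_div g c) = lead_coeff g"
proof -
  define h where "h = synthetic_div g c"
  have g: "g = [:- c, 1:] * h + [:poly g c:]"
    unfolding h_def using synthetic_div_correct' by metis
  have "h \<noteq> 0"
    using assms unfolding h_def by (simp add: synthetic_div_eq_0_iff)
  moreover have "degree g = Suc (degree h)"
    using assms unfolding h_def by (simp add: degree_synthetic_div)
  ultimately have "lead_coeff g = Polynomial.coeff ([:- c, 1:] * h) (Suc (degree h))"
    by (subst (1) g) simp
  also have "\<dots> = lead_coeff h"
    using \<open>h \<noteq> 0\<close> by (simp add: coeff_mult_degree_sum [of "[:- c, 1:]" h, simplified])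
  finally show ?thesis
    unfolding h_def by simp
qed

lemma prime_dvd_poly_synthetic_div:
  fixes g :: "'a::{comm_ring_1, normalization_semidom} poly"
  assumes "prime p" "p dvd poly g c" "p dvd poly g r" "\<not> p dvd r - c"
  shows "p dvd poly (synthetic_div g c) r"
proof -
  have "poly g r = (r - c) * poly (synthetic_div g c) r + poly g c"
    by (subst (1) synthetic_div_correct' [of c g, symmetric]) (simp add: algebra_simps)
  then have "p dvd (r - c) * poly (synthetic_div g c) r"
    using assms(2,3) by (metis add_diff_cancel_right' dvd_diff)
  then show ?thesis
    using assms(1,4) prime_dvd_mult_iff by blast
qed

lemma card_roots_mod_prime_le_degree:
  fixes g :: "int poly" and q :: nat
  assumes "prime q" "\<not> int q dvd lead_coeff g"
  shows "card {r \<in> {0..<q}. int q dvd poly g (int r)} \<le> degree g"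
  using assms(2)
proof (induction "degree g" arbitrary: g)
  case 0
  then obtain a where "g = [:a:]"
    by (metis degree_eq_zeroE)
  with 0 show ?case
    by simp
next
  case (Suc n)
  let ?roots = "\<lambda>g. {r \<in> {0..<q}. int q dvd poly g (int r)}"
  show ?case
  proof (cases "?roots g = {}")
    case False
    then obtain c where c: "c \<in> ?roots g" by auto
    let ?h = "synthetic_div g (int c)"
    have "?roots g \<subseteq> insert c (?roots ?h)"
    proof
      fix r assume r: "r \<in> ?roots g"
      have "\<not> int q dvd int r - int c" if "r \<noteq> c"
        using that r c dvd_imp_le_int[of "int r - int c" "int q"] by auto
      then show "r \<in> insert c (?roots ?h)"
        using r c prime_dvd_poly_synthetic_div[of "int q" g "int c" "int r"] assms(1) by auto
    qed
    then have "card (?roots g) \<le> card (insert c (?roots ?h))"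
      by (intro card_mono) auto
    also have "\<dots> \<le> Suc (card (?roots ?h))"
      by (rule card_insert_le_m1) simp_all
    finally have "card (?roots g) \<le> Suc (card (?roots ?h))" .
    moreover have "degree ?h = n"
      using Suc.hyps(2) by (simp add: degree_synthetic_div)
    moreover have "card (?roots ?h) \<le> degree ?h"
      using Suc \<open>degree ?h = n\<close> lead_coeff_synthetic_div[of g "int c"]
      by (intro Suc.hyps(1)) simp_all
    ultimately show ?thesis
      using Suc.hyps(2) by simp
  qed (metis card.empty le0)
qed

lemma exists_nonroot_mod_prime:
  fixes f :: "int poly" and q :: nat
  assumes "prime q" "\<not> int q dvd lead_coeff f" "degree f < q"
  obtains r where "r < q" "\<not> int q dvd poly f (int r)"
proof -
  have "card {r \<in> {0..<q}. int q dvd poly f (int r)} < card {0..<q}"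
    using card_roots_mod_prime_le_degree[OF assms(1,2)] assms(3) by simp
  then have "{r \<in> {0..<q}. int q dvd poly f (int r)} \<noteq> {0..<q}"
    by (metis less_irrefl)
  then show thesis
    using that by (simp add: set_eq_iff) blast
qed

lemma fermat_theorem_int:
  fixes p :: nat and y :: int
  assumes "prime p" "\<not> int p dvd y"
  shows "[y ^ (p - 1) = 1] (mod int p)"
proof -
  define a where "a = nat (y mod int p)"
  have a: "int a = y mod int p"
    using assms(1) unfolding a_def by (simp add: prime_gt_0_nat)
  then have "\<not> p dvd a"
    using assms(2) by (metis dvd_mod_iff dvd_refl of_nat_dvd_iff)
  then have "[a ^ (p - 1) = 1] (mod p)"
    by (rule fermat_theorem [OF assms(1)])
  then have "[int a ^ (p - 1) = 1] (mod int p)"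
    by (metis cong_int_iff of_nat_1 of_nat_power)
  moreover have "[y ^ (p - 1) = int a ^ (p - 1)] (mod int p)"
    by (intro cong_pow) (simp add: a cong_def)
  ultimately show ?thesis
    by (rule cong_trans [rotated])
qed

lemma power_pred_mod_prime_in_01:
  fixes p :: nat and y :: int
  assumes "prime p"
  shows "y ^ (p - 1) mod int p \<in> {0, 1}"
proof (cases "int p dvd y")
  case True
  moreover have "p - 1 \<noteq> 0"
    using prime_gt_1_nat [OF assms] by simp
  ultimately have "int p dvd y ^ (p - 1)"
    by (meson dvd_power dvd_trans neq0_conv)
  then show ?thesis
    by (simp only: dvd_imp_mod_0 insert_iff simp_thms)
next
  case False
  then have "[y ^ (p - 1) = 1] (mod int p)"
    by (rule fermat_theorem_int [OF assms])
  moreover have "1 mod int p = 1"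
    using prime_gt_1_nat [OF assms] by simp
  ultimately show ?thesis
    by (simp add: cong_def)
qed

lemma power_pred_mod_not_in_01:
  fixes N p q :: nat and y :: int
  assumes "N > 0" "prime p" "prime q" "p dvd N" "q dvd N"
    and "int p dvd y" "\<not> int q dvd y"
  shows "y ^ (N - 1) mod int N \<notin> {0, 1}"
proof
  assume mod_01: "y ^ (N - 1) mod int N \<in> {0, 1}"
  have "p \<le> N"
    using assms(1,4) by (rule dvd_imp_le [rotated])
  then have "N > 1"
    using prime_gt_1_nat [OF assms(2)] by simp
  then have p_dvd_power: "int p dvd y ^ (N - 1)"
    using assms(6) by (meson dvd_power dvd_trans zero_less_diff)
  show False
  proof (cases "y ^ (N - 1) mod int N = 0")
    case True
    then have "int N dvd y ^ (N - 1)"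
      by (rule mod_0_imp_dvd)
    with assms(5) have "int q dvd y ^ (N - 1)"
      by (meson dvd_trans of_nat_dvd_iff)
    moreover have "prime (int q)"
      using assms(3) by simp
    ultimately show False
      using assms(7) prime_dvd_power by blast
  next
    case False
    with mod_01 have "y ^ (N - 1) mod int N = 1 mod int N"
      using \<open>N > 1\<close> by simp
    then have "[y ^ (N - 1) = 1] (mod int p)"
      using assms(4) cong_dvd_modulus unfolding cong_def [symmetric] by fastforce
    then have "int p dvd 1"
      using p_dvd_power cong_dvd_iff by blast
    then show False
      using assms(2) by simp
  qed
qed

lemma chinese_remainder_root_nonroot:
  fixes f :: "int poly" and b :: int and p q r :: nat
  assumes "coprime p q" "p > 0" "q > 0"
    and "int p dvd poly f b" "\<not> int q dvd poly f (int r)"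
  obtains x where "x < p * q" "int p dvd poly f (int x)" "\<not> int q dvd poly f (int x)"
proof -
  obtain x where x: "x < p * q" "[x = nat (b mod int p)] (mod p)" "[x = r] (mod q)"
    using binary_chinese_remainder_unique_nat [OF assms(1)] assms(2,3) by blast
  have "[int x = int (nat (b mod int p))] (mod int p)"
    using x(2) cong_int_iff by blast
  then have "[int x = b] (mod int p)"
    using assms(2) by (simp add: cong_def)
  then have "[poly f (int x) = poly f b] (mod int p)"
    by (rule cong_poly)
  then have "int p dvd poly f (int x)"
    using assms(4) cong_dvd_iff by blast
  moreover have "[poly f (int x) = poly f (int r)] (mod int q)"
    using x(3) cong_int_iff cong_poly by blast
  then have "\<not> int q dvd poly f (int x)"
    using assms(5) cong_dvd_iff by blast
  ultimately show thesis
    using that x(1) by blast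
qed

lemma composite_exists_power_pred_mod_not_in_01:
  fixes N p q :: nat and f :: "int poly" and b :: int
  assumes "N > 0" "prime p" "prime q" "p \<noteq> q" "p dvd N" "q dvd N"
    and "int p dvd poly f b" "\<not> int q dvd lead_coeff f" "degree f < q"
  shows "\<exists>x\<in>{0..N-1}. poly f (int x) ^ (N - 1) mod int N \<notin> {0, 1}"
proof -
  obtain r where "\<not> int q dvd poly f (int r)"
    using exists_nonroot_mod_prime assms(3,8,9) by blast
  moreover have "coprime p q"
    using assms(2-4) by (simp add: primes_coprime)
  ultimately obtain x where x: "x < p * q" "int p dvd poly f (int x)" "\<not> int q dvd poly f (int x)"
    using chinese_remainder_root_nonroot assms(2,3,7) prime_gt_0_nat by metis
  have "p * q \<le> N"
    using \<open>coprime p q\<close> assms(1,5,6) by (simp add: divides_mult dvd_imp_le)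
  with x(1) have "x \<in> {0..N-1}"
    by simp
  with power_pred_mod_not_in_01 [OF assms(1,2,3,5,6) x(2,3)] show ?thesis
    by blast
qed

lemma prime_Max_prime_divisors:
  fixes N p :: nat
  assumes "N > 0" "prime p" "p dvd N"
  shows "prime (Max {q. prime q \<and> q dvd N})" "Max {q. prime q \<and> q dvd N} dvd N"
proof -
  have prime_factors: "{q. prime q \<and> q dvd N} = prime_factors N"
    using assms(1) by (simp add: prime_factors_dvd)
  have "Max {q. prime q \<and> q dvd N} \<in> prime_factors N"
    unfolding prime_factors by (rule Max_in) (use assms prime_factors in blast)+
  then show "prime (Max {q. prime q \<and> q dvd N})" "Max {q. prime q \<and> q dvd N} dvd N"
    using prime_factors by blast+
qed

theorem theorem5p1:
  fixes N :: nat and b :: int and f :: "int poly"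
  assumes "odd N"
    and "prime N \<or> (\<exists>p1 p2. prime p1 \<and> prime p2 \<and> p1 \<noteq> p2 \<and> p1 dvd N \<and> p2 dvd N)"
    and "poly f b = int N"
    and "degree f < Max {q. prime q \<and> q dvd N}"
    and "gcd (lead_coeff f) (int N) = 1"
  shows "prime N \<longleftrightarrow>
           (\<forall>x\<in>{0..N-1}. (poly f (int x)) ^ (N - 1) mod int N \<in> {0, 1})"
proof
  assume "prime N"
  then show "\<forall>x\<in>{0..N-1}. (poly f (int x)) ^ (N - 1) mod int N \<in> {0, 1}"
    using power_pred_mod_prime_in_01 by blast
next
  assume criterion: "\<forall>x\<in>{0..N-1}. (poly f (int x)) ^ (N - 1) mod int N \<in> {0, 1}"
  show "prime N"
  proof (rule ccontr)
    assume "\<not> prime N"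
    then obtain p1 p2 where p12: "prime p1" "prime p2" "p1 \<noteq> p2" "p1 dvd N" "p2 dvd N"
      using assms(2) by blast
    \<comment> \<open>Oddness of \<open>N\<close> is only needed to exclude \<open>N = 0\<close>.\<close>
    have "N > 0"
      using assms(1) by (rule odd_pos)
    define q where "q = Max {q. prime q \<and> q dvd N}"
    have q: "prime q" "q dvd N"
      unfolding q_def using prime_Max_prime_divisors \<open>N > 0\<close> p12(1,4) by blast+
    obtain p where p: "prime p" "p dvd N" "p \<noteq> q"
      using p12 by metis
    have "\<not> int q dvd lead_coeff f"
    proof
      assume "int q dvd lead_coeff f"
      with q(2) have "int q dvd gcd (lead_coeff f) (int N)"
        by simp
      with assms(5) q(1) show False
        by simp
    qed
    moreover have "int p dvd poly f b"
      using assms(3) p(2) by simp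
    ultimately show False
      using composite_exists_power_pred_mod_not_in_01 [OF \<open>N > 0\<close> p(1) q(1) p(3) p(2) q(2)]
        assms(4) criterion unfolding q_def by blast
  qed
qed

end
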